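(* Let $\tau\in(0,1]$ and suppose $k\,\alpha^{(2-\tau)d}\ge 2$. Let $u,v\in V$ be distinct with $|\Gamma(u)\cap\Gamma(v)|\ge\tau d$. Then, under the Fast-Filter model described in the context, with probability at least $1/2$ there exists $i\in[k]$ with $u\in S_i$ and $v\in S_i$.
   Context: Let $G=(U,V,E)$ be a bipartite graph with $|U|=M$ and $|V|=N$. For $v\in V$ let $\Gamma(v)\subseteq U$ be its set of neighbours, and assume $|\Gamma(v)|=d\ge 1$ for every $v\in V$. Let $k=2^{m}$ and $\alpha=2^{-r}$, where $m,r$ are positive integers. Identify $[k]=\{1,\dots,k\}$ bijectively with the vector space $\mathrm{GF}(2)^m$ (for instance via the binary representation of $i-1$). Fast-Filter model: for each $u\in U$, independently draw a uniformly random matrix $A'_u\in\mathrm{GF}(2)^{r\times m}$ and a uniformly random vector $b'_u\in\mathrm{GF}(2)^{r}$; all of these are mutually independent. For $v\in V$, let $A^v$ be the $(dr)\times m$ matrix obtained by stacking the matrices $A'_u$, $u\in\Gamma(v)$, in a fixed order, and let $b^v\in\mathrm{GF}(2)^{dr}$ be obtained by stacking the $b'_u$, $u\in\Gamma(v)$, in the same order. For $i\in[k]$ (viewed as a vector in $\mathrm{GF}(2)^m$), the survival set is $S_i=\{v\in V: A^v i+b^v=0\}$, with arithmetic over $\mathrm{GF}(2)$. *)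

theory Defs
  imports "HOL-Probability.Probability" "HOL-Library.Z2"
begin

text \<open>A matrix in GF(2)^(r x m) is a function
  nat => nat => bit vanishing outside rows 0..<r and columns 0..<m;
  a vector in GF(2)^r is a function nat => bit vanishing outside 0..<r.\<close>

definition gf2_mats :: "nat \<Rightarrow> nat \<Rightarrow> (nat \<Rightarrow> nat \<Rightarrow> bit) set" where
  "gf2_mats r m = {A. \<forall>j l. A j l \<noteq> 0 \<longrightarrow> j < r \<and> l < m}"

definition gf2_vecs :: "nat \<Rightarrow> (nat \<Rightarrow> bit) set" where
  "gf2_vecs r = {b. \<forall>j. b j \<noteq> 0 \<longrightarrow> j < r}"

text \<open>Identification of i in [k] = {1..2^m} with GF(2)^m via binary representation of i-1.\<close>
definition idx_vec :: "nat \<Rightarrow> nat \<Rightarrow> nat \<Rightarrow> bit" where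
  "idx_vec m i l = (if l < m \<and> odd ((i - 1) div 2 ^ l) then 1 else 0)"

text \<open>Sample space of the Fast-Filter model: for each left vertex w in U a pair
  (A'_w, b'_w); uniform distribution on this product = independent uniform draws.\<close>
definition ff_space :: "'a set \<Rightarrow> nat \<Rightarrow> nat \<Rightarrow> ('a \<Rightarrow> (nat \<Rightarrow> nat \<Rightarrow> bit) \<times> (nat \<Rightarrow> bit)) set" where
  "ff_space U r m = PiE U (\<lambda>_. gf2_mats r m \<times> gf2_vecs r)"

definition ff_pmf :: "'a set \<Rightarrow> nat \<Rightarrow> nat \<Rightarrow> ('a \<Rightarrow> (nat \<Rightarrow> nat \<Rightarrow> bit) \<times> (nat \<Rightarrow> bit)) pmf" where
  "ff_pmf U r m = pmf_of_set (ff_space U r m)"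

text \<open>Stacked system for v: rows are indexed by pairs (w, j) with w in Gamma(v) (the
  block, in any fixed order) and j < r (row within the block).\<close>
definition stack_mat :: "('b \<Rightarrow> 'a set) \<Rightarrow> ('a \<Rightarrow> (nat \<Rightarrow> nat \<Rightarrow> bit) \<times> (nat \<Rightarrow> bit))
    \<Rightarrow> 'b \<Rightarrow> ('a \<times> nat) \<Rightarrow> nat \<Rightarrow> bit" where
  "stack_mat \<Gamma> \<omega> v = (\<lambda>(w, j) l. fst (\<omega> w) j l)"

definition stack_vec :: "('b \<Rightarrow> 'a set) \<Rightarrow> ('a \<Rightarrow> (nat \<Rightarrow> nat \<Rightarrow> bit) \<times> (nat \<Rightarrow> bit))
    \<Rightarrow> 'b \<Rightarrow> ('a \<times> nat) \<Rightarrow> bit" where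
  "stack_vec \<Gamma> \<omega> v = (\<lambda>(w, j). snd (\<omega> w) j)"

definition survival_set :: "'b set \<Rightarrow> ('b \<Rightarrow> 'a set) \<Rightarrow> nat \<Rightarrow> nat
    \<Rightarrow> ('a \<Rightarrow> (nat \<Rightarrow> nat \<Rightarrow> bit) \<times> (nat \<Rightarrow> bit)) \<Rightarrow> nat \<Rightarrow> 'b set" where
  "survival_set V \<Gamma> r m \<omega> i =
     {v \<in> V. \<forall>row \<in> \<Gamma> v \<times> {0..<r}.
        (\<Sum>l<m. stack_mat \<Gamma> \<omega> v row l * idx_vec m i l) + stack_vec \<Gamma> \<omega> v row = 0}"

end

theory Submission
  imports Defs "HOL-Library.Function_Algebras"
begin

text \<open>Let T be the union of the two neighbourhoods, so that |T| \<le> (2 - \<tau>) d. Both vertices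
  survive in bucket i iff every block (A'_w, b'_w) with w \<in> T satisfies A'_w i + b'_w = 0.
  Translating b'_w shows that a block does so with probability 2^-r, and for buckets i \<noteq> j,
  translating in addition the column of A'_w at a coordinate where i and j differ shows that the
  two conditions are independent. So the k events "both survive in bucket i" are pairwise
  independent, each of probability p = 2^(-r |T|) \<ge> \<alpha>^((2 - \<tau>) d), and Chebyshev's inequality
  for their number bounds the probability that none occurs by 1 / (k p) \<le> 1/2.\<close>

lemma integrable_measure_pmf_bounded:
  fixes f :: "'a \<Rightarrow> real"
  shows "(\<And>\<omega>. \<bar>f \<omega>\<bar> \<le> B) \<Longrightarrow> integrable (measure_pmf M) f"
  by (intro measure_pmf.integrable_const_bound[where B = B]) auto

definition event_count :: "'i set \<Rightarrow> ('i \<Rightarrow> 'a set) \<Rightarrow> 'a \<Rightarrow> real" where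
  "event_count I E \<omega> = (\<Sum>i\<in>I. indicator (E i) \<omega>)"

lemma abs_event_count_le: "\<bar>event_count I E \<omega>\<bar> \<le> card I"
  using sum_bounded_above[of I "\<lambda>i. indicator (E i) \<omega> :: real" 1]
  by (simp add: event_count_def sum_nonneg)

context
  fixes M :: "'a pmf" and I :: "'i set" and E :: "'i \<Rightarrow> 'a set" and p :: real
  assumes finite_I: "finite I"
    and prob_E: "\<And>i. i \<in> I \<Longrightarrow> measure_pmf.prob M (E i) = p"
    and prob_EE: "\<And>i j. i \<in> I \<Longrightarrow> j \<in> I \<Longrightarrow> i \<noteq> j
      \<Longrightarrow> measure_pmf.prob M (E i \<inter> E j) = p ^ 2"
begin

lemma integrable_event_count: "integrable M (event_count I E)"
  by (rule integrable_measure_pmf_bounded[OF abs_event_count_le])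

lemma integrable_event_count_squared: "integrable M (\<lambda>\<omega>. (event_count I E \<omega>)\<^sup>2)"
proof (rule integrable_measure_pmf_bounded)
  show "\<bar>(event_count I E \<omega>)\<^sup>2\<bar> \<le> (real (card I))\<^sup>2" for \<omega>
    using power_mono[OF abs_event_count_le abs_ge_zero, where n = 2] by simp
qed

lemma expectation_event_count: "measure_pmf.expectation M (event_count I E) = card I * p"
  unfolding event_count_def using prob_E
  by (subst Bochner_Integration.integral_sum)
    (auto intro: integrable_measure_pmf_bounded[where B = 1])

lemma expectation_event_count_squared:
  "measure_pmf.expectation M (\<lambda>\<omega>. (event_count I E \<omega>)\<^sup>2)
    = card I * (p + (real (card I) - 1) * p\<^sup>2)"
proof -
  have "measure_pmf.expectation M (\<lambda>\<omega>. (event_count I E \<omega>)\<^sup>2)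
      = (\<Sum>i\<in>I. \<Sum>j\<in>I. measure_pmf.prob M (E i \<inter> E j))"
    unfolding event_count_def power2_eq_square sum_product indicator_inter_arith[symmetric]
    by (simp add: Bochner_Integration.integral_sum integrable_measure_pmf_bounded[where B = 1])
  also have "\<dots> = (\<Sum>i\<in>I. p + (real (card I) - 1) * p\<^sup>2)"
  proof (rule sum.cong[OF refl])
    fix i assume i: "i \<in> I"
    then have "card I \<ge> 1" using finite_I by (simp add: Suc_le_eq card_gt_0_iff) blast
    have "(\<Sum>j\<in>I - {i}. measure_pmf.prob M (E i \<inter> E j)) = (\<Sum>j\<in>I - {i}. p\<^sup>2)"
      by (rule sum.cong) (use i prob_EE in auto)
    also have "\<dots> = (real (card I) - 1) * p\<^sup>2"
      using finite_I i \<open>card I \<ge> 1\<close> by (simp add: card_Diff_singleton of_nat_diff)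
    finally show "(\<Sum>j\<in>I. measure_pmf.prob M (E i \<inter> E j)) = p + (real (card I) - 1) * p\<^sup>2"
      using finite_I i prob_E by (simp add: sum.remove)
  qed
  finally show ?thesis by simp
qed

lemma variance_event_count_le:
  "measure_pmf.expectation M (\<lambda>\<omega>. (event_count I E \<omega> - card I * p)\<^sup>2) \<le> card I * p"
proof -
  have "measure_pmf.expectation M (\<lambda>\<omega>. (event_count I E \<omega> - card I * p)\<^sup>2)
      = measure_pmf.expectation M (\<lambda>\<omega>. (event_count I E \<omega>)\<^sup>2)
        - 2 * (card I * p) * measure_pmf.expectation M (event_count I E) + (card I * p)\<^sup>2"
    unfolding power2_diff
    using integrable_event_count_squared integrable_event_count by (simp add: mult.assoc)
  also have "\<dots> = card I * p - card I * p\<^sup>2"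
    unfolding expectation_event_count_squared expectation_event_count
    by (simp add: power2_eq_square algebra_simps)
  finally show ?thesis by simp
qed

lemma prob_no_event_le_pairwise_independent:
  assumes mean_pos: "card I * p > 0"
  shows "measure_pmf.prob M {\<omega>. \<forall>i\<in>I. \<omega> \<notin> E i} \<le> 1 / (card I * p)"
proof -
  let ?X = "event_count I E" and ?\<mu> = "card I * p"
  have "{\<omega>. \<forall>i\<in>I. \<omega> \<notin> E i}
      \<subseteq> {\<omega> \<in> space (measure_pmf M). ?\<mu> \<le> \<bar>?X \<omega> - measure_pmf.expectation M ?X\<bar>}"
    using mean_pos by (auto simp: event_count_def expectation_event_count)
  then have "measure_pmf.prob M {\<omega>. \<forall>i\<in>I. \<omega> \<notin> E i}
      \<le> measure_pmf.expectation M (\<lambda>\<omega>. (?X \<omega> - measure_pmf.expectation M ?X)\<^sup>2) / ?\<mu>\<^sup>2"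
    using measure_pmf.Chebyshev_inequality[OF _ integrable_event_count_squared, of ?\<mu>] mean_pos
    by (auto intro: order.trans[OF measure_pmf.finite_measure_mono])
  also have "\<dots> \<le> ?\<mu> / ?\<mu>\<^sup>2"
    using variance_event_count_le by (simp add: expectation_event_count divide_right_mono)
  also have "\<dots> = 1 / ?\<mu>"
    using mean_pos by (simp add: power2_eq_square)
  finally show ?thesis .
qed

end

lemma prob_pmf_of_set_fiber_translation:
  fixes g :: "'a \<Rightarrow> 'b::ab_group_add"
  assumes "finite S" "S \<noteq> {}" "finite R" "g ` S \<subseteq> R"
    and bij: "\<And>s. s \<in> R \<Longrightarrow> bij_betw (h s) S S"
    and shift: "\<And>s z. s \<in> R \<Longrightarrow> z \<in> S \<Longrightarrow> g (h s z) = g z + s"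
  shows "measure_pmf.prob (pmf_of_set S) {z. g z = 0} = 1 / card R"
proof -
  define fiber where "fiber s = {z \<in> S. g z = s}" for s
  have fiber_bij: "bij_betw (h s) (fiber 0) (fiber s)" if s: "s \<in> R" for s
  proof (rule bij_betw_subset[OF bij[OF s]])
    show "h s ` fiber 0 = fiber s"
    proof safe
      fix z assume "z \<in> fiber 0"
      then show "h s z \<in> fiber s"
        using shift[OF s] bij_betwE[OF bij[OF s]] by (auto simp: fiber_def)
    next
      fix y assume y: "y \<in> fiber s"
      then obtain z where z: "z \<in> S" "y = h s z"
        using bij_betw_imp_surj_on[OF bij[OF s]] by (auto simp: fiber_def)
      then have "g z = 0" using y shift[OF s z(1)] by (simp add: fiber_def)
      then show "y \<in> h s ` fiber 0" using z by (auto simp: fiber_def)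
    qed
  qed (auto simp: fiber_def)
  have "S = (\<Union>s\<in>R. fiber s)" using assms(4) by (auto simp: fiber_def)
  also have "card \<dots> = (\<Sum>s\<in>R. card (fiber s))"
    by (rule card_UN_disjoint) (use assms(1,3) in \<open>auto simp: fiber_def\<close>)
  also have "\<dots> = (\<Sum>s\<in>R. card (fiber 0))"
    using bij_betw_same_card[OF fiber_bij] by (intro sum.cong) auto
  finally have "card S = card R * card (fiber 0)" by simp
  moreover have "card S > 0" using assms(1,2) by (simp add: card_gt_0_iff)
  moreover have "S \<inter> {z. g z = 0} = fiber 0" by (auto simp: fiber_def)
  ultimately show ?thesis
    using assms(1,2) by (simp add: measure_pmf_of_set)
qed

lemma sum_add_delta_mult:
  fixes A w :: "nat \<Rightarrow> 'a::semiring_0"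
  assumes "l0 < m"
  shows "(\<Sum>l<m. (A l + (if l = l0 then c else 0)) * w l) = (\<Sum>l<m. A l * w l) + c * w l0"
proof -
  have "(\<Sum>l<m. (A l + (if l = l0 then c else 0)) * w l)
      = (\<Sum>l<m. A l * w l + (if l = l0 then c * w l else 0))"
    by (intro sum.cong) (auto simp: distrib_right)
  then show ?thesis using assms by (simp add: sum.distrib)
qed

lemma bij_betw_involution: "(\<And>z. z \<in> S \<Longrightarrow> h z \<in> S \<and> h (h z) = z) \<Longrightarrow> bij_betw h S S"
  by (rule bij_betw_byWitness[where f' = h]) auto

lemma prob_Pi_pmf_all_in:
  assumes "finite U" "T \<subseteq> U"
  shows "measure_pmf.prob (Pi_pmf U dflt (\<lambda>_. P)) {\<omega>. \<forall>w\<in>T. \<omega> w \<in> C}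
    = measure_pmf.prob P C ^ card T"
proof -
  have "{\<omega>. \<forall>w\<in>T. \<omega> w \<in> C} = Pi U (\<lambda>w. if w \<in> T then C else UNIV)"
    using assms(2) by (auto simp: Pi_def)
  then have "measure_pmf.prob (Pi_pmf U dflt (\<lambda>_. P)) {\<omega>. \<forall>w\<in>T. \<omega> w \<in> C}
      = (\<Prod>w\<in>U. measure_pmf.prob P (if w \<in> T then C else UNIV))"
    using measure_Pi_pmf_Pi[OF assms(1)] by simp
  also have "\<dots> = (\<Prod>w\<in>U. if w \<in> T then measure_pmf.prob P C else 1)"
    by (rule prod.cong) auto
  also have "\<dots> = measure_pmf.prob P C ^ card T"
    using assms by (simp add: prod.If_cases Int_absorb1)
  finally show ?thesis .
qed

lemma card_Un_le_of_card_Int_ge: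
  assumes "finite A" "finite B" "card A = d" "card B = d" "\<tau> * real d \<le> real (card (A \<inter> B))"
  shows "real (card (A \<union> B)) \<le> (2 - \<tau>) * real d"
  using card_Un_Int[OF assms(1,2)] assms(3-5) by (simp add: algebra_simps)

lemma two_powr_neg_powr_le_power:
  assumes "real t \<le> e"
  shows "(2 powr - real r) powr e \<le> (1 / 2 ^ r) ^ t"
proof -
  have "(2 powr - real r) powr e = 2 powr (- (real r * e))" by (simp add: powr_powr)
  also have "\<dots> \<le> 2 powr (- (real r * real t))"
    using assms by (intro powr_mono) (auto intro: mult_left_mono)
  also have "\<dots> = (1 / 2 ^ r) ^ t"
    by (simp add: powr_minus powr_realpow power_mult power_one_over inverse_eq_divide
        flip: of_nat_mult)
  finally show ?thesis .
qed

(* Keep + and * on bit as field operations instead of rewriting them to xor and and. *)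
declare add_bit_eq_xor [simp del] mult_bit_eq_and [simp del]

lemma bit_add_self [simp]: "(a::bit) + a = 0"
  by (cases a) simp_all

lemma gf2_vecs_add: "a \<in> gf2_vecs r \<Longrightarrow> b \<in> gf2_vecs r \<Longrightarrow> a + b \<in> gf2_vecs r"
  by (auto simp: gf2_vecs_def) (metis add_0 bit_not_one_iff)

lemma gf2_mats_add: "A \<in> gf2_mats r m \<Longrightarrow> B \<in> gf2_mats r m \<Longrightarrow> A + B \<in> gf2_mats r m"
  by (auto simp: gf2_mats_def) (metis add_0 bit_not_one_iff)+

lemma finite_gf2_vecs: "finite (gf2_vecs r)" and card_gf2_vecs: "card (gf2_vecs r) = 2 ^ r"
proof -
  have "bij_betw (\<lambda>b. {j. b j = 1}) (gf2_vecs r) (Pow {..<r})"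
    by (rule bij_betw_byWitness[where f' = "\<lambda>X j. if j \<in> X then 1 else 0"])
      (auto simp: gf2_vecs_def fun_eq_iff split: if_splits)
  then show "finite (gf2_vecs r)" "card (gf2_vecs r) = 2 ^ r"
    by (simp_all add: bij_betw_finite bij_betw_same_card card_Pow)
qed

lemma finite_gf2_mats: "finite (gf2_mats r m)"
proof (rule inj_on_finite)
  show "inj_on (\<lambda>A. {(j, l). A j l = 1}) (gf2_mats r m)"
    by (rule inj_onI) (simp add: set_eq_iff fun_eq_iff, metis bit_not_one_iff)
  show "(\<lambda>A. {(j, l). A j l = 1}) ` gf2_mats r m \<subseteq> Pow ({..<r} \<times> {..<m})"
    by (auto simp: gf2_mats_def)
qed simp

lemma idx_vec_in_gf2_vecs: "idx_vec m i \<in> gf2_vecs m"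
  by (simp add: idx_vec_def gf2_vecs_def)

lemma inj_on_idx_vec: "inj_on (idx_vec m) {1..2 ^ m}"
proof (rule inj_onI)
  fix i i' assume i: "i \<in> {1..2 ^ m}" and i': "i' \<in> {1..2 ^ m}"
    and eq: "idx_vec m i = idx_vec m i'"
  have "bit (i - 1) n = bit (i' - 1) n" for n
  proof (cases "n < m")
    case True
    then show ?thesis
      using fun_cong[OF eq, of n] by (simp add: idx_vec_def bit_iff_odd split: if_splits)
  next
    case False
    then have "i - 1 < 2 ^ n" "i' - 1 < 2 ^ n"
      using i i' order.strict_trans2[OF _ power_increasing[of m n "2::nat"]] by auto
    then show ?thesis by (simp add: bit_iff_odd)
  qed
  then show "i = i'" using i i' bit_eqI[of "i - 1" "i' - 1"] by auto
qed

definition gf2_blocks :: "nat \<Rightarrow> nat \<Rightarrow> ((nat \<Rightarrow> nat \<Rightarrow> bit) \<times> (nat \<Rightarrow> bit)) set" where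
  "gf2_blocks r m = gf2_mats r m \<times> gf2_vecs r"

definition gf2_affine ::
    "nat \<Rightarrow> (nat \<Rightarrow> bit) \<Rightarrow> (nat \<Rightarrow> nat \<Rightarrow> bit) \<times> (nat \<Rightarrow> bit) \<Rightarrow> nat \<Rightarrow> bit" where
  "gf2_affine m v z = (\<lambda>j. (\<Sum>l<m. fst z j l * v l) + snd z j)"

definition passing_blocks ::
    "nat \<Rightarrow> nat \<Rightarrow> (nat \<Rightarrow> bit) \<Rightarrow> ((nat \<Rightarrow> nat \<Rightarrow> bit) \<times> (nat \<Rightarrow> bit)) set" where
  "passing_blocks r m v = {z. \<forall>j<r. gf2_affine m v z j = 0}"

lemma finite_gf2_blocks: "finite (gf2_blocks r m)"
  by (simp add: gf2_blocks_def finite_gf2_mats finite_gf2_vecs)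

lemma gf2_blocks_nonempty: "gf2_blocks r m \<noteq> {}"
proof -
  have "(0, 0) \<in> gf2_blocks r m" by (simp add: gf2_blocks_def gf2_mats_def gf2_vecs_def)
  then show ?thesis by blast
qed

lemma gf2_affine_in_gf2_vecs:
  assumes "z \<in> gf2_blocks r m"
  shows "gf2_affine m v z \<in> gf2_vecs r"
proof -
  have "fst z j l = 0" "snd z j = 0" if "\<not> j < r" for j l
    using assms that
    unfolding gf2_blocks_def gf2_mats_def gf2_vecs_def mem_Times_iff mem_Collect_eq by blast+
  then have "gf2_affine m v z j = 0" if "\<not> j < r" for j
    using that by (simp add: gf2_affine_def)
  then show ?thesis unfolding gf2_vecs_def by blast
qed

lemma passing_blocks_iff:
  "z \<in> gf2_blocks r m \<Longrightarrow> z \<in> passing_blocks r m v \<longleftrightarrow> gf2_affine m v z = 0"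
  using gf2_affine_in_gf2_vecs[of z r m v]
  by (auto simp: passing_blocks_def gf2_vecs_def fun_eq_iff)

lemma prob_passing_blocks:
  "measure_pmf.prob (pmf_of_set (gf2_blocks r m)) (passing_blocks r m v) = 1 / 2 ^ r"
proof -
  define h where "h s z = (fst z, snd z + s)"
    for s :: "nat \<Rightarrow> bit" and z :: "(nat \<Rightarrow> nat \<Rightarrow> bit) \<times> (nat \<Rightarrow> bit)"
  have "measure_pmf.prob (pmf_of_set (gf2_blocks r m)) {z. gf2_affine m v z = 0}
      = 1 / card (gf2_vecs r)"
  proof (rule prob_pmf_of_set_fiber_translation)
    show "bij_betw (h s) (gf2_blocks r m) (gf2_blocks r m)" if "s \<in> gf2_vecs r" for s
      using that
      by (intro bij_betw_involution) (auto simp: h_def gf2_blocks_def fun_eq_iff gf2_vecs_add)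
    show "gf2_affine m v (h s z) = gf2_affine m v z + s" for s z
      by (simp add: h_def gf2_affine_def fun_eq_iff add.assoc)
  qed (auto simp: finite_gf2_blocks gf2_blocks_nonempty finite_gf2_vecs gf2_affine_in_gf2_vecs)
  moreover have "gf2_blocks r m \<inter> passing_blocks r m v
      = gf2_blocks r m \<inter> {z. gf2_affine m v z = 0}"
    using passing_blocks_iff by blast
  ultimately show ?thesis
    by (simp add: measure_pmf_of_set finite_gf2_blocks gf2_blocks_nonempty card_gf2_vecs)
qed

lemma prob_passing_blocks_two:
  assumes "v \<in> gf2_vecs m" "v' \<in> gf2_vecs m" "v \<noteq> v'"
  shows "measure_pmf.prob (pmf_of_set (gf2_blocks r m))
      (passing_blocks r m v \<inter> passing_blocks r m v') = (1 / 2 ^ r) ^ 2"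
proof -
  obtain l0 where differ: "v l0 \<noteq> v' l0" using assms(3) by auto
  then have l0: "l0 < m"
    using assms(1,2) unfolding gf2_vecs_def mem_Collect_eq by metis
  have v'_l0: "v' l0 = v l0 + 1"
    using differ by (cases "v l0"; cases "v' l0") simp_all
  define g where "g z = (gf2_affine m v z, gf2_affine m v' z)" for z
  \<comment> \<open>adding s + t to column l0 of A and s + (s + t) v l0 to b shifts (A v + b, A v' + b)
    by (s, t), because v l0 + v' l0 = 1\<close>
  define h where "h st z = (fst z + (\<lambda>j l. if l = l0 then (fst st + snd st) j else 0),
      snd z + fst st + (\<lambda>j. (fst st + snd st) j * v l0))"
    for st :: "(nat \<Rightarrow> bit) \<times> (nat \<Rightarrow> bit)" and z :: "(nat \<Rightarrow> nat \<Rightarrow> bit) \<times> (nat \<Rightarrow> bit)"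
  have "measure_pmf.prob (pmf_of_set (gf2_blocks r m)) {z. g z = 0}
      = 1 / card (gf2_vecs r \<times> gf2_vecs r)"
  proof (rule prob_pmf_of_set_fiber_translation)
    show "bij_betw (h st) (gf2_blocks r m) (gf2_blocks r m)"
      if "st \<in> gf2_vecs r \<times> gf2_vecs r" for st
    proof (rule bij_betw_involution)
      fix z assume "z \<in> gf2_blocks r m"
      moreover have "fst st + snd st \<in> gf2_vecs r"
        using that by (auto intro: gf2_vecs_add)
      then have "(\<lambda>j l. if l = l0 then (fst st + snd st) j else 0) \<in> gf2_mats r m"
          and "(\<lambda>j. (fst st + snd st) j * v l0) \<in> gf2_vecs r"
        using l0 unfolding gf2_mats_def gf2_vecs_def mem_Collect_eq by (metis mult_zero_left)+
      ultimately show "h st z \<in> gf2_blocks r m \<and> h st (h st z) = z"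
        using that by (auto simp: h_def gf2_blocks_def gf2_mats_add gf2_vecs_add fun_eq_iff)
    qed
    have shift: "gf2_affine m w (h st z)
        = gf2_affine m w z + fst st + (\<lambda>j. (fst st + snd st) j * (v l0 + w l0))" for w st z
      using l0 by (simp add: h_def gf2_affine_def fun_eq_iff sum_add_delta_mult) (simp add: algebra_simps)
    show "g (h st z) = g z + st" for st z
      by (simp add: g_def shift v'_l0 prod_eq_iff fun_eq_iff algebra_simps)
  qed (auto simp: finite_gf2_blocks gf2_blocks_nonempty finite_gf2_vecs gf2_affine_in_gf2_vecs
      g_def)
  moreover have "gf2_blocks r m \<inter> (passing_blocks r m v \<inter> passing_blocks r m v')
      = gf2_blocks r m \<inter> {z. g z = 0}"
    using passing_blocks_iff by (auto simp: g_def zero_prod_def)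
  ultimately show ?thesis
    by (simp add: measure_pmf_of_set finite_gf2_blocks gf2_blocks_nonempty card_gf2_vecs
        card_cartesian_product power2_eq_square)
qed

lemma ff_pmf_eq_Pi_pmf:
  assumes "finite U"
  shows "ff_pmf U r m = Pi_pmf U undefined (\<lambda>_. pmf_of_set (gf2_blocks r m))"
proof -
  have "Pi_pmf U undefined (\<lambda>_. pmf_of_set (gf2_blocks r m))
      = pmf_of_set (PiE_dflt U undefined (\<lambda>_. gf2_blocks r m))"
    by (rule Pi_pmf_of_set) (simp_all add: assms finite_gf2_blocks gf2_blocks_nonempty)
  also have "PiE_dflt U undefined (\<lambda>_. gf2_blocks r m) = ff_space U r m"
    by (auto simp: PiE_dflt_def ff_space_def PiE_def extensional_def gf2_blocks_def)
  finally show ?thesis by (simp add: ff_pmf_def)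
qed

definition blocks_pass :: "'a set \<Rightarrow> nat \<Rightarrow> nat \<Rightarrow> nat
    \<Rightarrow> ('a \<Rightarrow> (nat \<Rightarrow> nat \<Rightarrow> bit) \<times> (nat \<Rightarrow> bit)) set" where
  "blocks_pass T r m i = {\<omega>. \<forall>w\<in>T. \<omega> w \<in> passing_blocks r m (idx_vec m i)}"

lemma survival_set_iff:
  "v \<in> V \<Longrightarrow> v \<in> survival_set V \<Gamma> r m \<omega> i \<longleftrightarrow> \<omega> \<in> blocks_pass (\<Gamma> v) r m i"
  by (auto simp: survival_set_def stack_mat_def stack_vec_def blocks_pass_def passing_blocks_def
      gf2_affine_def)

lemma prob_blocks_pass:
  assumes "finite U" "T \<subseteq> U"
  shows "measure_pmf.prob (ff_pmf U r m) (blocks_pass T r m i) = (1 / 2 ^ r) ^ card T"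
  unfolding ff_pmf_eq_Pi_pmf[OF assms(1)] blocks_pass_def prob_Pi_pmf_all_in[OF assms]
    prob_passing_blocks ..

lemma prob_blocks_pass_inter:
  assumes "finite U" "T \<subseteq> U" "i \<in> {1..2 ^ m}" "j \<in> {1..2 ^ m}" "i \<noteq> j"
  shows "measure_pmf.prob (ff_pmf U r m) (blocks_pass T r m i \<inter> blocks_pass T r m j)
    = ((1 / 2 ^ r) ^ card T) ^ 2"
proof -
  have "idx_vec m i \<noteq> idx_vec m j"
    using inj_on_idx_vec[of m] assms(3-5) unfolding inj_on_def by blast
  then have both_pass: "measure_pmf.prob (pmf_of_set (gf2_blocks r m))
      (passing_blocks r m (idx_vec m i) \<inter> passing_blocks r m (idx_vec m j)) = (1 / 2 ^ r) ^ 2"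
    by (intro prob_passing_blocks_two idx_vec_in_gf2_vecs)
  have inter_eq: "blocks_pass T r m i \<inter> blocks_pass T r m j
      = {\<omega>. \<forall>w\<in>T. \<omega> w \<in> passing_blocks r m (idx_vec m i) \<inter> passing_blocks r m (idx_vec m j)}"
    by (auto simp: blocks_pass_def)
  have "measure_pmf.prob (ff_pmf U r m) (blocks_pass T r m i \<inter> blocks_pass T r m j)
      = ((1 / 2 ^ r) ^ 2) ^ card T"
    unfolding inter_eq ff_pmf_eq_Pi_pmf[OF assms(1)] prob_Pi_pmf_all_in[OF assms(1,2)] both_pass
    by simp
  then show ?thesis
    by (simp flip: power_mult add: mult.commute)
qed

theorem mainTheorem4:
  fixes U :: "'a set" and V :: "'b set" and \<Gamma> :: "'b \<Rightarrow> 'a set"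
    and d m r k :: nat and \<alpha> \<tau> :: real and x y :: 'b
  assumes "finite U" and "finite V"
    and "\<forall>v\<in>V. \<Gamma> v \<subseteq> U"
    and "\<forall>v\<in>V. card (\<Gamma> v) = d" and "d \<ge> 1"
    and "m > 0" and "r > 0"
    and "k = 2 ^ m" and "\<alpha> = 2 powr (- real r)"
    and "0 < \<tau>" and "\<tau> \<le> 1"
    and "real k * \<alpha> powr ((2 - \<tau>) * real d) \<ge> 2"
    and "x \<in> V" and "y \<in> V" and "x \<noteq> y"
    and "real (card (\<Gamma> x \<inter> \<Gamma> y)) \<ge> \<tau> * real d"
  shows "measure_pmf.prob (ff_pmf U r m)
           {\<omega>. \<exists>i\<in>{1..k}. x \<in> survival_set V \<Gamma> r m \<omega> i \<and> y \<in> survival_set V \<Gamma> r m \<omega> i}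
         \<ge> 1 / 2"
proof -
  define T where "T = \<Gamma> x \<union> \<Gamma> y"
  define p :: real where "p = (1 / 2 ^ r) ^ card T"
  let ?none = "{\<omega>. \<forall>i\<in>{1..k}. \<omega> \<notin> blocks_pass T r m i}"
  have T_sub: "T \<subseteq> U" using assms(3,13,14) by (auto simp: T_def)
  have "real (card T) \<le> (2 - \<tau>) * real d"
    unfolding T_def using assms(1,3,4,13,14,16)
    by (intro card_Un_le_of_card_Int_ge) (auto intro: finite_subset)
  then have "real k * \<alpha> powr ((2 - \<tau>) * real d) \<le> real k * p"
    unfolding assms(9) p_def by (intro mult_left_mono two_powr_neg_powr_le_power) auto
  then have mean: "2 \<le> real (card {1..k}) * p"
    using assms(12) by simp
  have "measure_pmf.prob (ff_pmf U r m) ?none \<le> 1 / (card {1..k} * p)"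
    using mean assms(1,8) T_sub
    by (intro prob_no_event_le_pairwise_independent)
      (auto simp: p_def prob_blocks_pass prob_blocks_pass_inter)
  also have "\<dots> \<le> 1 / 2"
    using mean by (intro divide_left_mono) auto
  moreover have "{\<omega>. \<exists>i\<in>{1..k}. x \<in> survival_set V \<Gamma> r m \<omega> i \<and> y \<in> survival_set V \<Gamma> r m \<omega> i}
      = UNIV - ?none"
    by (auto simp: survival_set_iff[OF assms(13)] survival_set_iff[OF assms(14)] T_def
        blocks_pass_def)
  ultimately show ?thesis
    using measure_pmf.prob_compl[of ?none] by simp
qed

end
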